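(* Suppose that $G \leq \mathrm{Homeo}^+(\mathbb{R})$ acts on $\mathbb{R}$ with no fixed points, and that $G^0 \neq 1$. Let $\Omega$ be a set on which $G$ acts faithfully and $2$-transitively. Then at least one of the following happens: (1) $G^0$ is regular on $\Omega$; (2) for every $x \in \mathbb{R}$, for every orbit $O^- \subset \Omega$ of $G_x^-$ and every orbit $O^+ \subset \Omega$ of $G_x^+$, we have $|O^- \cap O^+| \leq 1$.
   Context: $\mathrm{Homeo}^+(\mathbb{R})$ is the group of orientation-preserving homeomorphisms of $\mathbb{R}$. $G^0$ denotes the subgroup of compactly supported elements of $G$. For $x \in \mathbb{R}$, $G_x$ is the stabilizer of $x$ in $G$, and $G_x^-$, $G_x^+$ are the subgroups of $G_x$ consisting of elements supported in $(-\infty, x]$ and $[x, +\infty)$ respectively (i.e. acting trivially outside these sets). A permutation group is regular if it is transitive and all point stabilizers are trivial. $2$-transitive means transitive on ordered pairs of distinct elements. *)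

theory Defs
  imports "HOL-Analysis.Analysis"
begin

definition homeo_plus :: "(real \<Rightarrow> real) set" where
  "homeo_plus = {f. (\<exists>g. homeomorphism UNIV UNIV f g) \<and> strict_mono f}"

definition homeo_subgroup :: "(real \<Rightarrow> real) set \<Rightarrow> bool" where
  "homeo_subgroup G \<longleftrightarrow> G \<subseteq> homeo_plus \<and> id \<in> G \<and>
     (\<forall>f\<in>G. \<forall>g\<in>G. f \<circ> g \<in> G) \<and> (\<forall>f\<in>G. inv f \<in> G)"

definition no_fixed_points :: "(real \<Rightarrow> real) set \<Rightarrow> bool" where
  "no_fixed_points G \<longleftrightarrow> (\<forall>x. \<exists>g\<in>G. g x \<noteq> x)"

definition compact_part :: "(real \<Rightarrow> real) set \<Rightarrow> (real \<Rightarrow> real) set" where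
  "compact_part G = {g\<in>G. compact (closure {x. g x \<noteq> x})}"

definition stab :: "(real \<Rightarrow> real) set \<Rightarrow> real \<Rightarrow> (real \<Rightarrow> real) set" where
  "stab G x = {g\<in>G. g x = x}"

definition stab_minus :: "(real \<Rightarrow> real) set \<Rightarrow> real \<Rightarrow> (real \<Rightarrow> real) set" where
  "stab_minus G x = {g\<in>stab G x. \<forall>y. y > x \<longrightarrow> g y = y}"

definition stab_plus :: "(real \<Rightarrow> real) set \<Rightarrow> real \<Rightarrow> (real \<Rightarrow> real) set" where
  "stab_plus G x = {g\<in>stab G x. \<forall>y. y < x \<longrightarrow> g y = y}"

definition is_action :: "(real \<Rightarrow> real) set \<Rightarrow> 'b set \<Rightarrow> ((real \<Rightarrow> real) \<Rightarrow> 'b \<Rightarrow> 'b) \<Rightarrow> bool" where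
  "is_action G \<Omega> act \<longleftrightarrow>
     (\<forall>g\<in>G. \<forall>a\<in>\<Omega>. act g a \<in> \<Omega>) \<and>
     (\<forall>a\<in>\<Omega>. act id a = a) \<and>
     (\<forall>f\<in>G. \<forall>g\<in>G. \<forall>a\<in>\<Omega>. act (f \<circ> g) a = act f (act g a))"

definition faithful :: "(real \<Rightarrow> real) set \<Rightarrow> 'b set \<Rightarrow> ((real \<Rightarrow> real) \<Rightarrow> 'b \<Rightarrow> 'b) \<Rightarrow> bool" where
  "faithful G \<Omega> act \<longleftrightarrow> (\<forall>g\<in>G. (\<forall>a\<in>\<Omega>. act g a = a) \<longrightarrow> g = id)"

definition transitive_on :: "(real \<Rightarrow> real) set \<Rightarrow> 'b set \<Rightarrow> ((real \<Rightarrow> real) \<Rightarrow> 'b \<Rightarrow> 'b) \<Rightarrow> bool" where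
  "transitive_on H \<Omega> act \<longleftrightarrow> (\<forall>a\<in>\<Omega>. \<forall>b\<in>\<Omega>. \<exists>h\<in>H. act h a = b)"

definition two_transitive :: "(real \<Rightarrow> real) set \<Rightarrow> 'b set \<Rightarrow> ((real \<Rightarrow> real) \<Rightarrow> 'b \<Rightarrow> 'b) \<Rightarrow> bool" where
  "two_transitive H \<Omega> act \<longleftrightarrow>
     (\<forall>a\<in>\<Omega>. \<forall>b\<in>\<Omega>. \<forall>c\<in>\<Omega>. \<forall>d\<in>\<Omega>. a \<noteq> b \<longrightarrow> c \<noteq> d \<longrightarrow>
        (\<exists>h\<in>H. act h a = c \<and> act h b = d))"

definition regular_on :: "(real \<Rightarrow> real) set \<Rightarrow> 'b set \<Rightarrow> ((real \<Rightarrow> real) \<Rightarrow> 'b \<Rightarrow> 'b) \<Rightarrow> bool" where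
  "regular_on H \<Omega> act \<longleftrightarrow> transitive_on H \<Omega> act \<and>
     (\<forall>a\<in>\<Omega>. \<forall>h\<in>H. act h a = a \<longrightarrow> h = id)"

definition orbit :: "(real \<Rightarrow> real) set \<Rightarrow> ((real \<Rightarrow> real) \<Rightarrow> 'b \<Rightarrow> 'b) \<Rightarrow> 'b \<Rightarrow> 'b set" where
  "orbit H act a = (\<lambda>h. act h a) ` H"

end

theory Submission
  imports Defs
begin

text \<open>If an orbit of \<open>G\<^sub>x\<^sup>-\<close> and an orbit of \<open>G\<^sub>x\<^sup>+\<close> meet in two points \<open>u \<noteq> v\<close>, then
  elements of \<open>G\<^sub>x\<^sup>-\<close> and of \<open>G\<^sub>x\<^sup>+\<close> both carry \<open>u\<close> to \<open>v\<close>; conjugating by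
  2-transitivity, every pair \<open>a \<noteq> b\<close> is carried in this way at some \<open>y\<close>. As \<open>G\<^sub>y\<^sup>-\<close>
  and \<open>G\<^sub>y\<^sup>+\<close> commute, each element of either one then fixes \<open>a\<close> iff it fixes \<open>b\<close>.

  \<open>G\<^sup>0\<close> is transitive, being a nontrivial normal subgroup of a 2-transitive group. A point
  stabilizer \<open>G\<^sub>a\<close> is maximal and \<open>G\<close> has no global fixed point, so \<open>G\<^sub>a\<close> fixes no real
  number and hence has unbounded orbits on \<open>\<real>\<close>. If \<open>1 \<noteq> f \<in> G\<^sup>0\<close> fixed \<open>a\<close>, some
  \<open>t \<in> G\<^sub>a\<close> would push the support of \<open>f' = t f t\<^sup>-\<^sup>1\<close> to the right of that of \<open>f\<close>;
  then for every \<open>y\<close>, \<open>f \<in> G\<^sub>y\<^sup>-\<close> or \<open>f' \<in> G\<^sub>y\<^sup>+\<close>, and comparing the fixed points of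
  \<open>f\<close> and \<open>f'\<close> at \<open>a\<close>, at a point \<open>b\<close> moved by \<open>f\<close>, and at \<open>t b\<close> is contradictory.\<close>

lemma homeo_plus_bij: "f \<in> homeo_plus \<Longrightarrow> bij f"
  unfolding homeo_plus_def homeomorphism_def by (auto simp: bij_def intro: inj_on_inverseI)

lemma stab_minus_in: "h \<in> stab_minus G y \<Longrightarrow> h \<in> G"
  and stab_plus_in: "h \<in> stab_plus G y \<Longrightarrow> h \<in> G"
  by (simp_all add: stab_minus_def stab_plus_def stab_def)

lemma stab_minus_mono: "y \<le> y' \<Longrightarrow> stab_minus G y \<subseteq> stab_minus G y'"
  by (auto simp: stab_minus_def stab_def) (metis order_le_less)

lemma stab_plus_mono: "y' \<le> y \<Longrightarrow> stab_plus G y \<subseteq> stab_plus G y'"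
  by (auto simp: stab_plus_def stab_def) (metis order_le_less)

lemma compact_part_eq: "compact_part G = (\<Union>p q. stab_plus G p \<inter> stab_minus G q)"
proof (intro equalityI subsetI)
  fix f assume "f \<in> compact_part G"
  then have "f \<in> G" and "bounded {x. f x \<noteq> x}"
    by (auto simp: compact_part_def)
  then obtain B where "\<And>x. f x \<noteq> x \<Longrightarrow> \<bar>x\<bar> \<le> B"
    by (auto simp: bounded_real)
  then have "f \<in> stab_plus G (- B - 1) \<inter> stab_minus G (B + 1)"
    using \<open>f \<in> G\<close> by (force simp: stab_plus_def stab_minus_def stab_def)
  then show "f \<in> (\<Union>p q. stab_plus G p \<inter> stab_minus G q)" by blast
next
  fix f assume "f \<in> (\<Union>p q. stab_plus G p \<inter> stab_minus G q)"
  then obtain p q where "f \<in> stab_plus G p" "f \<in> stab_minus G q" by blast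
  then have "f \<in> G" and "{x. f x \<noteq> x} \<subseteq> {p..q}"
    by (auto simp: stab_plus_def stab_minus_def stab_def not_le[symmetric])
  then show "f \<in> compact_part G"
    by (auto simp: compact_part_def intro: bounded_subset[OF compact_imp_bounded[OF compact_Icc]])
qed

lemma strict_mono_involution_fixed:
  fixes g :: "real \<Rightarrow> real"
  assumes "strict_mono g" and "g (g s) = s" shows "g s = s"
  by (metis assms linorder_neqE_linordered_idom order_less_asym strict_monoD)

locale homeo_group =
  fixes G :: "(real \<Rightarrow> real) set"
  assumes homeo_subgroup: "homeo_subgroup G"
begin

lemma id_in [simp]: "id \<in> G"
  and comp_in: "f \<in> G \<Longrightarrow> g \<in> G \<Longrightarrow> f \<circ> g \<in> G"
  and inv_in: "f \<in> G \<Longrightarrow> inv f \<in> G"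
  and in_homeo_plus: "f \<in> G \<Longrightarrow> f \<in> homeo_plus"
  using homeo_subgroup by (auto simp: homeo_subgroup_def)

lemma conj_in: "g \<in> G \<Longrightarrow> f \<in> G \<Longrightarrow> g \<circ> f \<circ> inv g \<in> G"
  by (simp add: comp_in inv_in)

lemma strict_mono: "f \<in> G \<Longrightarrow> strict_mono f"
  using in_homeo_plus by (simp add: homeo_plus_def)

lemma less_iff: "f \<in> G \<Longrightarrow> f x < f y \<longleftrightarrow> x < y"
  by (simp add: strict_mono strict_mono_less)

lemma le_iff: "f \<in> G \<Longrightarrow> f x \<le> f y \<longleftrightarrow> x \<le> y"
  by (simp add: strict_mono strict_mono_less_eq)

lemma inv_apply [simp]: "f \<in> G \<Longrightarrow> inv f (f z) = z"
  by (meson in_homeo_plus homeo_plus_bij bij_is_inj inv_f_f)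

lemma apply_inv: "f \<in> G \<Longrightarrow> f (inv f z) = z"
  by (meson in_homeo_plus homeo_plus_bij bij_is_surj surj_f_inv_f)

lemma inv_comp_self [simp]: "f \<in> G \<Longrightarrow> inv f \<circ> f = id"
  by auto

lemma stab_minus_conj:
  assumes h: "h \<in> stab_minus G y" and g: "g \<in> G"
  shows "g \<circ> h \<circ> inv g \<in> stab_minus G (g y)"
proof -
  have "h (inv g z) = inv g z" if "g y < z" for z
    using h g that less_iff[OF g, of y "inv g z"] by (auto simp: stab_minus_def apply_inv)
  then show ?thesis
    using h g by (auto simp: stab_minus_def stab_def conj_in apply_inv)
qed

lemma stab_plus_conj:
  assumes h: "h \<in> stab_plus G y" and g: "g \<in> G"
  shows "g \<circ> h \<circ> inv g \<in> stab_plus G (g y)"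
proof -
  have "h (inv g z) = inv g z" if "z < g y" for z
    using h g that less_iff[OF g, of "inv g z" y] by (auto simp: stab_plus_def apply_inv)
  then show ?thesis
    using h g by (auto simp: stab_plus_def stab_def conj_in apply_inv)
qed

lemma stab_minus_comp: "h \<in> stab_minus G y \<Longrightarrow> k \<in> stab_minus G y \<Longrightarrow> h \<circ> k \<in> stab_minus G y"
  and stab_plus_comp: "h \<in> stab_plus G y \<Longrightarrow> k \<in> stab_plus G y \<Longrightarrow> h \<circ> k \<in> stab_plus G y"
  by (auto simp: stab_minus_def stab_plus_def stab_def comp_in)

lemma stab_minus_inv: "h \<in> stab_minus G y \<Longrightarrow> inv h \<in> stab_minus G y"
  and stab_plus_inv: "h \<in> stab_plus G y \<Longrightarrow> inv h \<in> stab_plus G y"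
  by (auto simp: stab_minus_def stab_plus_def stab_def inv_in) (metis inv_apply)+

lemma stab_minus_plus_commute:
  assumes h: "h \<in> stab_minus G y" and k: "k \<in> stab_plus G y"
  shows "h \<circ> k = k \<circ> h"
proof
  fix z
  have "h \<in> G" "k \<in> G" "h y = y" "k y = y" "\<forall>z>y. h z = z" "\<forall>z<y. k z = z"
    using h k by (auto simp: stab_minus_def stab_plus_def stab_def)
  then show "(h \<circ> k) z = (k \<circ> h) z"
    by (cases z y rule: linorder_cases) (auto dest: less_iff[THEN iffD2])
qed

lemma compact_part_conj:
  assumes "f \<in> compact_part G" and g: "g \<in> G"
  shows "g \<circ> f \<circ> inv g \<in> compact_part G"
proof -
  obtain p q where "f \<in> stab_plus G p" "f \<in> stab_minus G q"
    using assms(1) unfolding compact_part_eq by blast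
  then have "g \<circ> f \<circ> inv g \<in> stab_plus G (g p) \<inter> stab_minus G (g q)"
    using g stab_plus_conj stab_minus_conj by blast
  then show ?thesis unfolding compact_part_eq by blast
qed

lemma Sup_orbit_fixed:
  assumes bdd: "bdd_above ((\<lambda>t. t p) ` G)" and h: "h \<in> G"
  shows "h (Sup ((\<lambda>t. t p) ` G)) = Sup ((\<lambda>t. t p) ` G)"
proof -
  define s where "s = Sup ((\<lambda>t. t p) ` G)"
  have le: "s \<le> g s" if g: "g \<in> G" for g
    unfolding s_def
  proof (rule cSup_least)
    show "(\<lambda>t. t p) ` G \<noteq> {}" using id_in by blast
    fix x assume "x \<in> (\<lambda>t. t p) ` G"
    then obtain t where t: "t \<in> G" and x: "x = g ((inv g \<circ> t) p)"
      using g by (auto simp: apply_inv)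
    have "(inv g \<circ> t) p \<le> s"
      unfolding s_def using bdd g t
      by (intro cSup_upper) (auto intro!: image_eqI[where x="inv g \<circ> t"] comp_in inv_in)
    then show "x \<le> g (Sup ((\<lambda>t. t p) ` G))"
      using le_iff[OF g] x by (simp add: s_def)
  qed
  have "h s \<le> s"
    using le[OF inv_in[OF h]] le_iff[OF h, of s "inv h s"] by (simp add: apply_inv h)
  then show ?thesis using le[OF h] by (simp add: s_def)
qed

lemma stab_homeo_subgroup: "homeo_subgroup (stab G s)"
  using in_homeo_plus by (auto simp: homeo_subgroup_def stab_def comp_in inv_in) (metis inv_apply)

lemma id_in_compact_part: "id \<in> compact_part G"
  by (simp add: compact_part_def)

end

locale homeo_action = homeo_group +
  fixes \<Omega> :: "'b set" and act :: "(real \<Rightarrow> real) \<Rightarrow> 'b \<Rightarrow> 'b"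
  assumes is_action: "is_action G \<Omega> act"
begin

lemma act_closed: "g \<in> G \<Longrightarrow> a \<in> \<Omega> \<Longrightarrow> act g a \<in> \<Omega>"
  and act_id [simp]: "a \<in> \<Omega> \<Longrightarrow> act id a = a"
  and act_comp: "f \<in> G \<Longrightarrow> g \<in> G \<Longrightarrow> a \<in> \<Omega> \<Longrightarrow> act (f \<circ> g) a = act f (act g a)"
  using is_action by (auto simp: is_action_def)

lemma act_inv_act [simp]: "g \<in> G \<Longrightarrow> a \<in> \<Omega> \<Longrightarrow> act (inv g) (act g a) = a"
  by (metis act_comp act_id inv_comp_self inv_in)

lemma act_eq_iff [simp]:
  "g \<in> G \<Longrightarrow> a \<in> \<Omega> \<Longrightarrow> b \<in> \<Omega> \<Longrightarrow> act g a = act g b \<longleftrightarrow> a = b"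
  by (metis act_inv_act)

lemma act_conj:
  "g \<in> G \<Longrightarrow> f \<in> G \<Longrightarrow> a \<in> \<Omega> \<Longrightarrow> act (g \<circ> f \<circ> inv g) (act g a) = act g (act f a)"
  by (simp add: act_comp comp_in inv_in act_closed)

lemma commuting_fixes_iff:
  assumes "c \<in> G" "f \<in> G" "f \<circ> c = c \<circ> f" "a \<in> \<Omega>"
  shows "act f (act c a) = act c a \<longleftrightarrow> act f a = a"
  using assms by (metis act_comp act_closed act_eq_iff)

lemma point_stabilizer_homeo_subgroup: "a \<in> \<Omega> \<Longrightarrow> homeo_subgroup {g \<in> G. act g a = a}"
  using in_homeo_plus by (auto simp: homeo_subgroup_def comp_in inv_in act_comp) (metis act_inv_act)

definition doubly_reachable :: "real \<Rightarrow> 'b \<Rightarrow> 'b \<Rightarrow> bool" where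
  "doubly_reachable y a b \<longleftrightarrow>
     (\<exists>h\<in>stab_minus G y. \<exists>k\<in>stab_plus G y. act h a = b \<and> act k a = b)"

text \<open>The element of the opposite half-stabilizer carrying \<open>a\<close> to \<open>b\<close> commutes with \<open>f\<close>.\<close>
lemma doubly_reachable_fixes_iff:
  assumes "doubly_reachable y a b" and a: "a \<in> \<Omega>"
  shows "f \<in> stab_minus G y \<Longrightarrow> act f a = a \<longleftrightarrow> act f b = b"
    and "f \<in> stab_plus G y \<Longrightarrow> act f a = a \<longleftrightarrow> act f b = b"
proof -
  obtain h k where h: "h \<in> stab_minus G y" "act h a = b" and k: "k \<in> stab_plus G y" "act k a = b"
    using assms(1) unfolding doubly_reachable_def by blast
  show "act f a = a \<longleftrightarrow> act f b = b" if f: "f \<in> stab_minus G y"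
    using commuting_fixes_iff[OF stab_plus_in[OF k(1)] stab_minus_in[OF f]
        stab_minus_plus_commute[OF f k(1)] a] k(2) by simp
  show "act f a = a \<longleftrightarrow> act f b = b" if f: "f \<in> stab_plus G y"
    using commuting_fixes_iff[OF stab_minus_in[OF h(1)] stab_plus_in[OF f]
        stab_minus_plus_commute[OF h(1) f, symmetric] a] h(2) by simp
qed

lemma doubly_reachable_conj:
  assumes "doubly_reachable y a b" and a: "a \<in> \<Omega>" and g: "g \<in> G"
  shows "doubly_reachable (g y) (act g a) (act g b)"
proof -
  obtain h k where h: "h \<in> stab_minus G y" "act h a = b" and k: "k \<in> stab_plus G y" "act k a = b"
    using assms(1) unfolding doubly_reachable_def by blast
  have "act (g \<circ> h \<circ> inv g) (act g a) = act g b" "act (g \<circ> k \<circ> inv g) (act g a) = act g b"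
    using act_conj[OF g stab_minus_in[OF h(1)] a] act_conj[OF g stab_plus_in[OF k(1)] a] h(2) k(2)
    by simp_all
  then show ?thesis
    unfolding doubly_reachable_def using stab_minus_conj[OF h(1) g] stab_plus_conj[OF k(1) g] by blast
qed

lemma doubly_reachable_if_orbits_meet_twice:
  assumes "a \<in> \<Omega>" "b \<in> \<Omega>"
    and "u \<in> orbit (stab_minus G x) act a \<inter> orbit (stab_plus G x) act b"
    and "v \<in> orbit (stab_minus G x) act a \<inter> orbit (stab_plus G x) act b"
  shows "doubly_reachable x u v"
proof -
  obtain h1 h2 k1 k2 where h: "h1 \<in> stab_minus G x" "h2 \<in> stab_minus G x"
    and k: "k1 \<in> stab_plus G x" "k2 \<in> stab_plus G x"
    and uv: "u = act h1 a" "v = act h2 a" "u = act k1 b" "v = act k2 b"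
    using assms(3,4) unfolding orbit_def by blast
  have "act (h2 \<circ> inv h1) u = v"
    using h uv(1,2) assms(1) by (simp add: act_comp inv_in act_closed stab_minus_in)
  moreover have "act (k2 \<circ> inv k1) u = v"
    using k uv(3,4) assms(2) by (simp add: act_comp inv_in act_closed stab_plus_in)
  moreover have "h2 \<circ> inv h1 \<in> stab_minus G x" "k2 \<circ> inv k1 \<in> stab_plus G x"
    using h k by (simp_all add: stab_minus_comp stab_minus_inv stab_plus_comp stab_plus_inv)
  ultimately show ?thesis unfolding doubly_reachable_def by blast
qed

lemma two_transitive_doubly_reachable:
  assumes "two_transitive G \<Omega> act" and "doubly_reachable x u v" "u \<in> \<Omega>" "v \<in> \<Omega>" "u \<noteq> v"
    and "a \<in> \<Omega>" "b \<in> \<Omega>" "a \<noteq> b"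
  shows "\<exists>y. doubly_reachable y a b"
proof -
  obtain g where "g \<in> G" "act g u = a" "act g v = b"
    using assms(1,3-8) unfolding two_transitive_def by metis
  then show ?thesis using doubly_reachable_conj[OF assms(2,3)] by metis
qed

lemma point_stabilizer_maximal:
  assumes tt: "two_transitive G \<Omega> act" and a: "a \<in> \<Omega>"
    and K: "homeo_subgroup K" "K \<subseteq> G" "{g \<in> G. act g a = a} \<subseteq> K"
    and c: "c \<in> K" "act c a \<noteq> a"
  shows "K = G"
proof
  interpret K: homeo_group K using K(1) by unfold_locales
  show "G \<subseteq> K"
  proof
    fix g assume g: "g \<in> G"
    show "g \<in> K"
    proof (cases "act g a = a")
      case True then show ?thesis using g K(3) by blast
    next
      case False
      have cG: "c \<in> G" using c K(2) by blast
      obtain d where d: "d \<in> G" "act d a = a" "act d (act c a) = act g a"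
        using tt a c(2) False act_closed[OF cG a] act_closed[OF g a]
        unfolding two_transitive_def by metis
      define e where "e = inv c \<circ> inv d \<circ> g"
      have "act e a = a"
        using a cG d g by (simp add: e_def act_comp inv_in comp_in act_closed flip: d(3))
      moreover have "e \<in> G"
        using cG d(1) g by (simp add: e_def comp_in inv_in)
      ultimately have "e \<in> K"
        using K(3) by blast
      moreover have "d \<in> K" using d K(3) by blast
      moreover have "g = d \<circ> c \<circ> e"
        using cG d(1) by (simp add: e_def fun_eq_iff apply_inv)
      ultimately show ?thesis using c(1) K.comp_in by metis
    qed
  qed
qed (use K(2) in blast)

lemma point_stabilizer_moves_every_real:
  assumes tt: "two_transitive G \<Omega> act" and nf: "no_fixed_points G" and a: "a \<in> \<Omega>"
  shows "\<exists>g\<in>G. act g a = a \<and> g s \<noteq> s"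
proof (rule ccontr)
  assume "\<not> ?thesis"
  then have sub: "{g \<in> G. act g a = a} \<subseteq> stab G s" by (auto simp: stab_def)
  obtain g0 where g0: "g0 \<in> G" "g0 s \<noteq> s"
    using nf unfolding no_fixed_points_def by blast
  define b where "b = act g0 a"
  have b: "b \<in> \<Omega>" "b \<noteq> a"
    using sub g0 a by (auto simp: b_def act_closed stab_def)
  obtain g where g: "g \<in> G" "act g a = b" "act g b = a"
    using tt a b unfolding two_transitive_def by metis
  then have "act (g \<circ> g) a = a"
    using a b by (simp add: act_comp)
  then have "g \<circ> g \<in> stab G s"
    using sub g(1) by (auto simp: comp_in)
  then have "g s = s"
    using strict_mono_involution_fixed[OF strict_mono[OF g(1)]] by (simp add: stab_def)
  then have "stab G s = G"
    using point_stabilizer_maximal[OF tt a stab_homeo_subgroup _ sub] g b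
    by (auto simp: stab_def)
  then show False using g0 by (auto simp: stab_def)
qed

lemma point_stabilizer_unbounded:
  assumes tt: "two_transitive G \<Omega> act" and nf: "no_fixed_points G" and a: "a \<in> \<Omega>"
  shows "\<exists>t\<in>G. act t a = a \<and> q < t p"
proof (rule ccontr)
  define H where "H = {g \<in> G. act g a = a}"
  interpret H: homeo_group H
    using point_stabilizer_homeo_subgroup[OF a] by unfold_locales (simp add: H_def)
  assume "\<not> ?thesis"
  then have "bdd_above ((\<lambda>t. t p) ` H)"
    by (auto simp: H_def bdd_above_def not_less)
  then have "\<forall>h\<in>H. h (Sup ((\<lambda>t. t p) ` H)) = Sup ((\<lambda>t. t p) ` H)"
    using H.Sup_orbit_fixed by blast
  then show False
    using point_stabilizer_moves_every_real[OF tt nf a] by (auto simp: H_def)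
qed

lemma normal_subgroup_transitive:
  assumes tt: "two_transitive G \<Omega> act" and fa: "faithful G \<Omega> act"
    and N: "N \<subseteq> G" "id \<in> N" "N \<noteq> {id}" "\<And>n g. n \<in> N \<Longrightarrow> g \<in> G \<Longrightarrow> g \<circ> n \<circ> inv g \<in> N"
  shows "transitive_on N \<Omega> act"
  unfolding transitive_on_def
proof (intro ballI)
  obtain n where n: "n \<in> N" "n \<noteq> id" using N(2,3) by blast
  then obtain w where w: "w \<in> \<Omega>" "act n w \<noteq> w"
    using fa N(1) unfolding faithful_def by blast
  fix a b assume ab: "a \<in> \<Omega>" "b \<in> \<Omega>"
  show "\<exists>h\<in>N. act h a = b"
  proof (cases "a = b")
    case True then show ?thesis using N(2) ab by (auto intro!: bexI[of _ id])
  next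
    case False
    obtain g where g: "g \<in> G" "act g w = a" "act g (act n w) = b"
      using tt w ab False n(1) N(1) act_closed unfolding two_transitive_def by (metis subsetD)
    then have "act (g \<circ> n \<circ> inv g) a = b"
      using act_conj n(1) N(1) w(1) by blast
    then show ?thesis using N(4) n(1) g(1) by blast
  qed
qed

lemma separated_fixes_iff:
  assumes dr: "\<forall>a\<in>\<Omega>. \<forall>b\<in>\<Omega>. a \<noteq> b \<longrightarrow> (\<exists>y. doubly_reachable y a b)"
    and sep: "\<And>y. f \<in> stab_minus G y \<or> f' \<in> stab_plus G y"
    and ab: "a \<in> \<Omega>" "b \<in> \<Omega>"
  shows "(act f a = a \<longleftrightarrow> act f b = b) \<or> (act f' a = a \<longleftrightarrow> act f' b = b)"
proof (cases "a = b")
  case False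
  then obtain y where "doubly_reachable y a b" using dr ab by blast
  then show ?thesis using sep doubly_reachable_fixes_iff ab(1) by blast
qed simp

lemma compact_part_semiregular:
  assumes tt: "two_transitive G \<Omega> act" and nf: "no_fixed_points G" and fa: "faithful G \<Omega> act"
    and dr: "\<forall>a\<in>\<Omega>. \<forall>b\<in>\<Omega>. a \<noteq> b \<longrightarrow> (\<exists>y. doubly_reachable y a b)"
    and f: "f \<in> compact_part G" and a: "a \<in> \<Omega>" "act f a = a"
  shows "f = id"
proof (rule ccontr)
  assume "f \<noteq> id"
  have fG: "f \<in> G" using f by (simp add: compact_part_def)
  obtain b where b: "b \<in> \<Omega>" "act f b \<noteq> b"
    using fa fG \<open>f \<noteq> id\<close> unfolding faithful_def by blast
  obtain p q where pq: "f \<in> stab_plus G p" "f \<in> stab_minus G q"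
    using f unfolding compact_part_eq by blast
  obtain t where t: "t \<in> G" "act t a = a" "q < t p"
    using point_stabilizer_unbounded[OF tt nf a(1)] by blast
  define f' where "f' = t \<circ> f \<circ> inv t"
  have "f' \<in> stab_plus G (t p)"
    using stab_plus_conj[OF pq(1) t(1)] by (simp add: f'_def)
  then have sep: "f \<in> stab_minus G y \<or> f' \<in> stab_plus G y" for y
    using pq(2) t(3) stab_minus_mono[of q y] stab_plus_mono[of y "t p"] by fastforce
  have f'a: "act f' a = a"
    using act_conj[OF t(1) fG a(1)] a t(2) by (simp add: f'_def)
  have tb: "act t b \<in> \<Omega>" "act f' (act t b) \<noteq> act t b"
    using act_conj[OF t(1) fG b(1)] b t(1) act_closed[OF fG b(1)] by (simp_all add: f'_def act_closed)
  have "act f' b = b"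
    using separated_fixes_iff[OF dr sep a(1) b(1)] a(2) b(2) f'a by blast
  moreover have "act f (act t b) = act t b"
    using separated_fixes_iff[OF dr sep a(1) tb(1)] a(2) f'a tb(2) by blast
  ultimately show False
    using separated_fixes_iff[OF dr sep b(1) tb(1)] b(2) tb(2) by blast
qed

end

theorem proposition5p1:
  fixes G :: "(real \<Rightarrow> real) set"
    and \<Omega> :: "'b set"
    and act :: "(real \<Rightarrow> real) \<Rightarrow> 'b \<Rightarrow> 'b"
  assumes "homeo_subgroup G"
    and "no_fixed_points G"
    and "compact_part G \<noteq> {id}"
    and "is_action G \<Omega> act"
    and "faithful G \<Omega> act"
    and "two_transitive G \<Omega> act"
  shows "regular_on (compact_part G) \<Omega> act \<or>
         (\<forall>x::real. \<forall>a\<in>\<Omega>. \<forall>b\<in>\<Omega>. \<forall>u v.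
            u \<in> orbit (stab_minus G x) act a \<inter> orbit (stab_plus G x) act b \<longrightarrow>
            v \<in> orbit (stab_minus G x) act a \<inter> orbit (stab_plus G x) act b \<longrightarrow> u = v)"
proof (rule disjCI)
  interpret homeo_action G \<Omega> act using assms(1,4) by unfold_locales
  assume "\<not> (\<forall>x::real. \<forall>a\<in>\<Omega>. \<forall>b\<in>\<Omega>. \<forall>u v.
            u \<in> orbit (stab_minus G x) act a \<inter> orbit (stab_plus G x) act b \<longrightarrow>
            v \<in> orbit (stab_minus G x) act a \<inter> orbit (stab_plus G x) act b \<longrightarrow> u = v)"
  then obtain x a b u v where ab: "a \<in> \<Omega>" "b \<in> \<Omega>" and "u \<noteq> v"
    and u: "u \<in> orbit (stab_minus G x) act a \<inter> orbit (stab_plus G x) act b"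
    and v: "v \<in> orbit (stab_minus G x) act a \<inter> orbit (stab_plus G x) act b"
    by blast
  have "u \<in> \<Omega>" "v \<in> \<Omega>"
    using u v ab act_closed stab_minus_in unfolding orbit_def by blast+
  then have dr: "\<forall>a\<in>\<Omega>. \<forall>b\<in>\<Omega>. a \<noteq> b \<longrightarrow> (\<exists>y. doubly_reachable y a b)"
    using two_transitive_doubly_reachable[OF assms(6) doubly_reachable_if_orbits_meet_twice[OF ab u v]]
      \<open>u \<noteq> v\<close> by blast
  have "compact_part G \<subseteq> G" by (auto simp: compact_part_def)
  then have "transitive_on (compact_part G) \<Omega> act"
    using normal_subgroup_transitive[OF assms(6,5) _ id_in_compact_part assms(3) compact_part_conj]
    by blast
  then show "regular_on (compact_part G) \<Omega> act"
    using compact_part_semiregular[OF assms(6,2,5) dr] by (auto simp: regular_on_def)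
qed

end
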